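(* Let $q=3^m$ with $m\ge1$, let $\alpha\in\mathbb{F}_q$ be a non-square, and let $Z\in\mathbb{F}_{q^2}\setminus\mathbb{F}_q$ with $Z^2=\alpha$. Let $f(x)=x^{q+2}$ on $\mathbb{F}_{q^2}$ and for $b\in\mathbb{F}_{q^2}$ put $\beta(b)=\beta_f(1,\tfrac14 b)$. Then: (1) for every $c\in\mathbb{F}_q^*$, $\beta(c)=q+2$ if $c^2+1\in C_1$ and $\beta(c)=q$ otherwise; (2) for every $d\in\mathbb{F}_q^*$, $\beta(dZ)=1$; in particular $\nu_1>0$; (3) for all $c,d\in\mathbb{F}_q^*$, $\beta(c+dZ)\in\{0,1,2,5\}$.
   Context: $\beta_f(a,b)$ is the number of $(x,y)\in\mathbb{F}_{q^2}^2$ with $f(x)-f(y)=b$ and $f(x+a)-f(y+a)=b$. For the power function $f$, $\nu_i=\#\{b\in\mathbb{F}_{q^2}^*:\ \beta_f(1,b)=i\}$. $C_0$ (resp. $C_1$) denotes the set of nonzero squares (resp. non-squares) in $\mathbb{F}_q^*$. *)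

theory Defs
  imports Main
begin

definition Fq :: "nat \<Rightarrow> 'a::field set" where
  "Fq q = {x. x ^ q = x}"

definition C0 :: "nat \<Rightarrow> 'a::field set" where
  "C0 q = {x \<in> Fq q. x \<noteq> 0 \<and> (\<exists>y\<in>Fq q. y ^ 2 = x)}"

definition C1 :: "nat \<Rightarrow> 'a::field set" where
  "C1 q = {x \<in> Fq q. x \<noteq> 0} - C0 q"

definition beta_f :: "('a::{field,finite} \<Rightarrow> 'a) \<Rightarrow> 'a \<Rightarrow> 'a \<Rightarrow> nat" where
  "beta_f f a b = card {(x, y). f x - f y = b \<and> f (x + a) - f (y + a) = b}"

definition nu :: "('a::{field,finite} \<Rightarrow> 'a) \<Rightarrow> nat \<Rightarrow> nat" where
  "nu f i = card {b. b \<noteq> 0 \<and> beta_f f 1 b = i}"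

end

theory Submission
  imports Defs
begin

text \<open>Work in \<open>K = F_{q^2}\<close>, \<open>q = 3^m\<close>, where \<open>4 = 1\<close> and \<open>2 = -1\<close>. Writing the
  solutions of \<open>\<beta>(b)\<close> as \<open>(X + 1, Y + 1)\<close>, the two equations become
  \<open>(X + 1)^{q+2} - (Y + 1)^{q+2} = b = (X - 1)^{q+2} - (Y - 1)^{q+2}\<close>; their difference and
  sum read \<open>H X = H Y\<close> and \<open>P X - P Y = b\<close> with \<open>H X = X^{q+1} - X^2\<close> and
  \<open>P X = X^{q+2} + X^q - X\<close>. Now \<open>H X = H Y\<close> forces \<open>X, Y \<in> F_q\<close> or \<open>Y = \<plusminus>X\<close>, so for
  \<open>b \<noteq> 0\<close> we get \<open>q\<close> solutions with \<open>(X - Y)^3 = b\<close> if \<open>b \<in> F_q\<close>, plus one solution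
  \<open>(X, -X)\<close> for each \<open>X \<notin> F_q\<close> with \<open>P X = -b\<close>.

  For \<open>b = c \<in> F_q\<close> these \<open>X\<close> are the roots of \<open>(X - c)^2 = c^2 + 1\<close> outside \<open>F_q\<close>. For
  \<open>b = d Z\<close> they are the solutions of \<open>X^3 - X = b\<close> with \<open>X^q = -X\<close>, and \<open>X \<mapsto> X^3 - X\<close>
  permutes that set. For \<open>b = c + d Z\<close> the norm \<open>X \<mapsto> X^{q+1}\<close> maps them bijectively onto
  the roots in \<open>F_q\<close> of a quintic; if that quintic has three roots in \<open>F_q\<close>, its
  discriminant, a square in \<open>F_q\<close>, forces the two remaining roots into \<open>F_q\<close> as well.\<close>

section \<open>Algebra in characteristic three\<close>

text \<open>Identities that hold only in characteristic 3 are proved by exhibiting the multiple of 3 by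
  which their two sides differ.\<close>
lemma char3_eqI:
  fixes a b c :: "'a::idom"
  assumes "(3::'a) = 0" and "a = b + 3 * c"
  shows "a = b"
  using assms by simp

lemma cube_add_char3:
  fixes x y :: "'a::idom"
  assumes "(3::'a) = 0"
  shows "(x + y)^3 = x^3 + y^3"
  by (rule char3_eqI[OF assms, where c = "x^2 * y + x * y^2"]) algebra

lemma power_three_power_add_char3:
  fixes x y :: "'a::idom"
  assumes "(3::'a) = 0"
  shows "(x + y)^(3^k) = x^(3^k) + y^(3^k)"
proof (induction k)
  case (Suc k)
  have "(x + y)^(3^Suc k) = ((x + y)^(3^k))^3"
    by (simp add: power_mult[symmetric] mult.commute)
  also have "\<dots> = x^(3^Suc k) + y^(3^Suc k)"
    by (simp add: Suc cube_add_char3[OF assms] power_mult[symmetric] mult.commute)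
  finally show ?case .
qed simp

lemma both_diffs_eq_iff:
  fixes a1 a2 c1 c2 b :: "'a::field"
  assumes "(2::'a) \<noteq> 0"
  shows "(a1 - a2 = b \<and> c1 - c2 = b) \<longleftrightarrow> (a1 - c1 = a2 - c2 \<and> (a1 + c1) - (a2 + c2) = 2 * b)"
proof
  assume "a1 - c1 = a2 - c2 \<and> (a1 + c1) - (a2 + c2) = 2 * b"
  moreover have "2 * (a1 - a2) = (a1 - c1) - (a2 - c2) + ((a1 + c1) - (a2 + c2))"
    by (simp add: algebra_simps mult_2)
  ultimately have "2 * (a1 - a2) = 2 * b" by simp
  then have "a1 - a2 = b" by (simp only: mult_left_cancel[OF assms])
  moreover have "c1 - c2 = (a1 - a2) - ((a1 - c1) - (a2 - c2))" by simp
  ultimately show "a1 - a2 = b \<and> c1 - c2 = b" using \<open>a1 - c1 = a2 - c2 \<and> _\<close> by simp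
qed (auto simp: algebra_simps mult_2)

lemma quadratic_eq_0_if_three_roots:
  fixes a b c r1 r2 r3 :: "'a::field"
  assumes "r1 \<noteq> r2" "r1 \<noteq> r3" "r2 \<noteq> r3"
    and "a * r1^2 + b * r1 + c = 0" "a * r2^2 + b * r2 + c = 0" "a * r3^2 + b * r3 + c = 0"
  shows "a = 0 \<and> b = 0 \<and> c = 0"
proof -
  have "(r1 - r2) * (a * (r1 + r2) + b) = 0" "(r1 - r3) * (a * (r1 + r3) + b) = 0"
    using assms(4-6) by algebra+
  then have "a * (r1 + r2) + b = 0" "a * (r1 + r3) + b = 0"
    using assms(1,2) by simp_all
  then have "a * (r2 - r3) = 0" by algebra
  then have "a = 0" using assms(3) by simp
  then show ?thesis using \<open>a * (r1 + r2) + b = 0\<close> assms(4) by simp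
qed

section \<open>A family of quintics\<close>

definition esym1 :: "'a::idom \<Rightarrow> 'a \<Rightarrow> 'a \<Rightarrow> 'a \<Rightarrow> 'a \<Rightarrow> 'a" where
  "esym1 x y z u v = x + y + z + u + v"

definition esym2 :: "'a::idom \<Rightarrow> 'a \<Rightarrow> 'a \<Rightarrow> 'a \<Rightarrow> 'a \<Rightarrow> 'a" where
  "esym2 x y z u v = x*y + x*z + x*u + x*v + y*z + y*u + y*v + z*u + z*v + u*v"

definition esym3 :: "'a::idom \<Rightarrow> 'a \<Rightarrow> 'a \<Rightarrow> 'a \<Rightarrow> 'a \<Rightarrow> 'a" where
  "esym3 x y z u v =
     x*y*z + x*y*u + x*y*v + x*z*u + x*z*v + x*u*v + y*z*u + y*z*v + y*u*v + z*u*v"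

definition esym4 :: "'a::idom \<Rightarrow> 'a \<Rightarrow> 'a \<Rightarrow> 'a \<Rightarrow> 'a \<Rightarrow> 'a" where
  "esym4 x y z u v = x*y*z*u + x*y*z*v + x*y*u*v + x*z*u*v + y*z*u*v"

definition esym5 :: "'a::idom \<Rightarrow> 'a \<Rightarrow> 'a \<Rightarrow> 'a \<Rightarrow> 'a \<Rightarrow> 'a" where
  "esym5 x y z u v = x*y*z*u*v"

lemmas esym_defs = esym1_def esym2_def esym3_def esym4_def esym5_def

lemma prod_sub_esym:
  fixes n x y z u v :: "'a::idom"
  shows "(n - x) * (n - y) * (n - z) * (n - u) * (n - v) =
    n^5 - esym1 x y z u v * n^4 + esym2 x y z u v * n^3 - esym3 x y z u v * n^2
      + esym4 x y z u v * n - esym5 x y z u v"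
  unfolding esym_defs by algebra

lemma prod_diff_esym:
  fixes x y z u v :: "'a::idom"
  shows "(x - y) * (x - z) * (x - u) * (x - v) =
    5 * x^4 - 4 * esym1 x y z u v * x^3 + 3 * esym2 x y z u v * x^2
      - 2 * esym3 x y z u v * x + esym4 x y z u v"
  unfolding esym_defs by algebra

text \<open>For \<open>A = (w + w^q)^2\<close> and \<open>B = (w - w^q)^2\<close>, the roots in \<open>F_q\<close> of this quintic are
  the norms \<open>X^{q+1}\<close> of the solutions \<open>X \<notin> F_q\<close> of \<open>P X = w\<close>.\<close>
definition quintic :: "'a::idom \<Rightarrow> 'a \<Rightarrow> 'a \<Rightarrow> 'a" where
  "quintic A B n = n^5 - n^4 + n^3 + (B - A) * n^2 + A * n - A"

lemma quintic_char3:
  fixes A B n :: "'a::idom"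
  assumes "(3::'a) = 0"
  shows "quintic A B n = n^3 * (n + 1)^2 - A * (n + 1)^2 + B * n^2"
  unfolding quintic_def by (rule char3_eqI[OF assms, where c = "A * n - n^4"]) algebra

lemma conj_linear_prod_char3:
  fixes n w v :: "'a::idom"
  assumes "(3::'a) = 0"
  shows "((n - 1) * w - v) * ((n - 1) * v - w) = (n + 1)^2 * (w + v)^2 - n^2 * (w - v)^2"
  by (rule char3_eqI[OF assms, where c = "- (n * (w^2 + v^2) + w * v * (n^2 + 2 * n))"]) algebra

definition vieta_quintic :: "'a::idom \<Rightarrow> 'a \<Rightarrow> 'a \<Rightarrow> 'a \<Rightarrow> 'a \<Rightarrow> 'a \<Rightarrow> 'a \<Rightarrow> bool" where
  "vieta_quintic A B x y z u v \<longleftrightarrow>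
     esym1 x y z u v = 1 \<and> esym2 x y z u v = 1 \<and> esym3 x y z u v = A - B \<and>
     esym4 x y z u v = A \<and> esym5 x y z u v = A"

lemma vieta_quintic_move_to_front:
  assumes "vieta_quintic A B x y z u v"
  shows "vieta_quintic A B y x z u v" "vieta_quintic A B z x y u v"
    "vieta_quintic A B u x y z v" "vieta_quintic A B v x y z u"
  using assms unfolding vieta_quintic_def esym_defs by (simp_all add: ac_simps)

lemma quintic_eq_prod_if_vieta:
  fixes A B n :: "'a::idom"
  assumes "vieta_quintic A B x y z u v"
  shows "quintic A B n = (n - x) * (n - y) * (n - z) * (n - u) * (n - v)"
proof -
  have esym: "esym1 x y z u v = 1" "esym2 x y z u v = 1" "esym3 x y z u v = A - B"
    "esym4 x y z u v = A" "esym5 x y z u v = A"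
    using assms by (simp_all add: vieta_quintic_def)
  show ?thesis
    unfolding prod_sub_esym quintic_def esym by algebra
qed

lemma vieta_quintic_if_three_roots:
  fixes A B :: "'a::field"
  assumes distinct: "r1 \<noteq> r2" "r1 \<noteq> r3" "r2 \<noteq> r3"
    and roots: "quintic A B r1 = 0" "quintic A B r2 = 0" "quintic A B r3 = 0"
    and sum: "r4 + r5 = 1 - (r1 + r2 + r3)"
    and prod: "r4 * r5 = 1 - (r1 + r2 + r3) * (r4 + r5) - (r1 * r2 + r1 * r3 + r2 * r3)"
  shows "vieta_quintic A B r1 r2 r3 r4 r5"
proof -
  have e1: "esym1 r1 r2 r3 r4 r5 = 1"
    using sum by (simp add: esym1_def algebra_simps)
  have e2: "esym2 r1 r2 r3 r4 r5 = 1"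
    using prod by (simp add: esym2_def algebra_simps)
  define a b c where "a = B - A + esym3 r1 r2 r3 r4 r5" and "b = A - esym4 r1 r2 r3 r4 r5"
    and "c = esym5 r1 r2 r3 r4 r5 - A"
  have rest: "quintic A B n - (n - r1) * (n - r2) * (n - r3) * (n - r4) * (n - r5) =
      a * n^2 + b * n + c" for n
    unfolding prod_sub_esym quintic_def e1 e2 a_def b_def c_def by algebra
  have "a * r^2 + b * r + c = 0" if "r \<in> {r1, r2, r3}" for r
    using rest[of r, symmetric] roots that by auto
  then have "a = 0 \<and> b = 0 \<and> c = 0"
    by (intro quadratic_eq_0_if_three_roots[OF distinct]) auto
  then have "esym3 r1 r2 r3 r4 r5 = A - B" "esym4 r1 r2 r3 r4 r5 = A" "esym5 r1 r2 r3 r4 r5 = A"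
    unfolding a_def b_def c_def by (simp_all add: algebra_simps eq_diff_eq)
  then show ?thesis
    using e1 e2 by (simp add: vieta_quintic_def)
qed

definition diff_prod5 :: "'a::idom \<Rightarrow> 'a \<Rightarrow> 'a \<Rightarrow> 'a \<Rightarrow> 'a \<Rightarrow> 'a" where
  "diff_prod5 x y z u v =
     (x - y) * (x - z) * (x - u) * (x - v) * (y - z) * (y - u) * (y - v) * (z - u) * (z - v) * (u - v)"

text \<open>The left-hand side is the derivative of the quintic at its root \<open>x\<close>; in characteristic 3,
  \<open>(x + 1) Q'(x) = - B x - Q(x)\<close>.\<close>
lemma quintic_root_derivative:
  fixes A B x y z u v :: "'a::idom"
  assumes three: "(3::'a) = 0" and "vieta_quintic A B x y z u v"
  shows "(x - y) * (x - z) * (x - u) * (x - v) * (x + 1) = - B * x"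
proof -
  have esym: "esym1 x y z u v = 1" "esym2 x y z u v = 1" "esym3 x y z u v = A - B"
    "esym4 x y z u v = A" "esym5 x y z u v = A"
    using assms(2) by (simp_all add: vieta_quintic_def)
  have "quintic A B x = 0"
    using quintic_eq_prod_if_vieta[OF assms(2), of x] by simp
  then have root: "x^5 - x^4 + x^3 + (B - A) * x^2 + A * x - A = 0"
    by (simp add: quintic_def)
  have "(x - y) * (x - z) * (x - u) * (x - v) * (x + 1) =
      - B * x - (x^5 - x^4 + x^3 + (B - A) * x^2 + A * x - A) + 3 * (2 * x^5 + (1 - A + B) * x^2 + B * x)"
    unfolding prod_diff_esym esym by algebra
  then show ?thesis using root three by simp
qed

lemma quintic_diff_prod5_sq:
  fixes A B :: "'a::idom"
  assumes three: "(3::'a) = 0" and vieta: "vieta_quintic A B x1 x2 x3 x4 x5"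
  shows "(diff_prod5 x1 x2 x3 x4 x5)^2 * B = A * B^5"
proof -
  note deriv = vieta_quintic_move_to_front[OF vieta, THEN quintic_root_derivative[OF three]]
  have rearrange: "(a*b*c*d*p1) * ((-a)*e*f*g*p2) * ((-b)*(-e)*h*i*p3) * ((-c)*(-f)*(-h)*j*p4)
      * ((-d)*(-g)*(-i)*(-j)*p5) = (a*b*c*d*e*f*g*h*i*j)^2 * (p1*p2*p3*p4*p5)"
    for a b c d e f g h i j p1 p2 p3 p4 p5 :: 'a
    by algebra
  have "(diff_prod5 x1 x2 x3 x4 x5)^2 * ((x1+1)*(x2+1)*(x3+1)*(x4+1)*(x5+1))
      = (- B * x1) * (- B * x2) * (- B * x3) * (- B * x4) * (- B * x5)"
    using rearrange[of "x1-x2" "x1-x3" "x1-x4" "x1-x5" "x1+1" "x2-x3" "x2-x4" "x2-x5" "x2+1"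
        "x3-x4" "x3-x5" "x3+1" "x4-x5" "x4+1" "x5+1"] deriv
    by (simp add: diff_prod5_def quintic_root_derivative[OF three vieta])
  also have "\<dots> = - (B^5 * A)"
    using vieta by (simp add: vieta_quintic_def esym5_def) algebra
  finally have *: "(diff_prod5 x1 x2 x3 x4 x5)^2 * ((x1+1)*(x2+1)*(x3+1)*(x4+1)*(x5+1)) = - (B^5 * A)" .
  have "quintic A B (-1) = B + 3 * (-1 - A)"
    by (simp add: quintic_def algebra_simps)
  then have "(-1-x1)*(-1-x2)*(-1-x3)*(-1-x4)*(-1-x5) = B"
    using quintic_eq_prod_if_vieta[OF vieta, of "-1"] three by simp
  moreover have "(-1-x1)*(-1-x2)*(-1-x3)*(-1-x4)*(-1-x5) = - ((x1+1)*(x2+1)*(x3+1)*(x4+1)*(x5+1))"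
    by algebra
  ultimately have "(x1+1)*(x2+1)*(x3+1)*(x4+1)*(x5+1) = - B"
    by (metis minus_minus)
  with * have "(diff_prod5 x1 x2 x3 x4 x5)^2 * (- B) = - (B^5 * A)"
    by simp
  then show ?thesis
    by (simp add: mult.commute)
qed

section \<open>The field with \<open>q^2\<close> elements\<close>

lemma of_nat_card_UNIV_eq_0: "of_nat (card (UNIV :: 'a set)) = (0 :: 'a::{ring_1,finite})"
proof -
  have "(\<Sum>y\<in>UNIV. y + 1) = (\<Sum>y\<in>UNIV. y :: 'a)"
    by (rule sum.reindex_bij_witness[of _ "\<lambda>y. y - 1" "\<lambda>y. y + 1"]) auto
  then show ?thesis
    by (simp add: sum.distrib)
qed

lemma power_card_UNIV_eq_self: "x ^ card (UNIV :: 'a set) = (x :: 'a::{field,finite})"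
proof (cases "x = 0")
  case False
  have "(\<Prod>y\<in>UNIV - {0}. x * y) = (\<Prod>y\<in>UNIV - {0}. y)"
    by (rule prod.reindex_bij_witness[of _ "\<lambda>y. y / x" "\<lambda>y. x * y"]) (use False in auto)
  then have "x ^ card (UNIV - {0 :: 'a}) = 1"
    by (simp add: prod.distrib)
  then have "x ^ card (UNIV - {0 :: 'a}) * x = x"
    by simp
  moreover have "card (UNIV - {0 :: 'a}) + 1 = card (UNIV :: 'a set)"
    using finite_UNIV_card_ge_0[where 'a = 'a] by (simp add: card_Diff_singleton)
  ultimately show ?thesis
    by (metis power_Suc2 Suc_eq_plus1)
qed (simp add: finite_UNIV_card_ge_0)

locale char3_quadratic_ext =
  fixes m q :: nat and Z :: "'a::{field,finite}"
  assumes q_def: "q = 3 ^ m"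
    and card_UNIV: "card (UNIV :: 'a set) = q^2"
    and Z_notin_Fq: "Z \<notin> Fq q"
    and Z_sq_in_Fq: "Z^2 \<in> Fq q"
begin

lemma q_pos: "q > 0"
  using q_def by simp

lemma char_three: "(3::'a) = 0"
proof -
  have "(3::'a) ^ (2 * m) = 0"
    using of_nat_card_UNIV_eq_0[where 'a = 'a] by (simp add: card_UNIV q_def power_mult)
  then show ?thesis
    by simp
qed

lemma two_eq_minus_one: "(2::'a) = -1"
  using char_three by (simp add: eq_neg_iff_add_eq_0)

lemma four_eq_one: "(4::'a) = 1"
proof -
  have "(4::'a) = 3 + 1"
    by simp
  then show ?thesis
    using char_three by simp
qed

lemma two_neq_0: "(2::'a) \<noteq> 0"
proof
  assume "(2::'a) = 0"
  moreover have "(3::'a) = 2 + 1"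
    by simp
  ultimately show False
    using char_three by simp
qed

lemma neq_minus_self: "x \<noteq> 0 \<Longrightarrow> x \<noteq> - (x::'a)"
  using two_neq_0 by (metis add_eq_0_iff2 mult_2 mult_eq_0_iff)

lemma frob_add: "(x + y)^q = x^q + (y::'a)^q"
  using power_three_power_add_char3[OF char_three] by (simp add: q_def)

lemma frob_minus: "(- x)^q = - ((x::'a)^q)"
  using q_def by simp

lemma frob_diff: "(x - y)^q = x^q - (y::'a)^q"
  using frob_add[of x "- y"] by (simp add: frob_minus)

lemma frob_frob: "((x::'a)^q)^q = x"
  using power_card_UNIV_eq_self[of x] by (simp add: card_UNIV power_mult[symmetric] power2_eq_square)

lemma frob_eq_0_iff: "(x::'a)^q = 0 \<longleftrightarrow> x = 0"
  using q_pos by simp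

lemma frob_power: "((x::'a)^k)^q = (x^q)^k"
  by (metis power_mult mult.commute)

lemma Fq_iff: "x \<in> Fq q \<longleftrightarrow> (x::'a)^q = x"
  by (simp add: Fq_def)

lemma Fq_0 [simp]: "(0::'a) \<in> Fq q" and Fq_1 [simp]: "(1::'a) \<in> Fq q"
  using q_pos by (simp_all add: Fq_iff)

lemma Fq_add: "x \<in> Fq q \<Longrightarrow> y \<in> Fq q \<Longrightarrow> x + (y::'a) \<in> Fq q"
  by (simp add: Fq_iff frob_add)

lemma Fq_diff: "x \<in> Fq q \<Longrightarrow> y \<in> Fq q \<Longrightarrow> x - (y::'a) \<in> Fq q"
  by (simp add: Fq_iff frob_diff)

lemma Fq_minus_iff: "- x \<in> Fq q \<longleftrightarrow> (x::'a) \<in> Fq q"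
  by (auto simp add: Fq_iff frob_minus)

lemma Fq_mult: "x \<in> Fq q \<Longrightarrow> y \<in> Fq q \<Longrightarrow> x * (y::'a) \<in> Fq q"
  by (simp add: Fq_iff power_mult_distrib)

lemma Fq_divide: "x \<in> Fq q \<Longrightarrow> y \<in> Fq q \<Longrightarrow> x / (y::'a) \<in> Fq q"
  by (simp add: Fq_iff power_divide)

lemma Fq_power: "x \<in> Fq q \<Longrightarrow> (x::'a)^k \<in> Fq q"
  by (simp add: Fq_iff frob_power)

lemma trace_in_Fq: "(x::'a) + x^q \<in> Fq q"
  by (simp add: Fq_iff frob_add frob_frob add.commute)

lemma norm_in_Fq: "(x::'a) * x^q \<in> Fq q"
  by (simp add: Fq_iff power_mult_distrib frob_frob mult.commute)

lemma frob_Z: "Z^q = - Z"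
proof -
  have "(Z^q)^2 = Z^2"
    using Z_sq_in_Fq by (simp add: Fq_iff frob_power)
  moreover have "Z^q \<noteq> Z"
    using Z_notin_Fq by (simp add: Fq_iff)
  ultimately show ?thesis
    by (simp add: power2_eq_iff)
qed

lemma Z_neq_0: "Z \<noteq> 0"
  using Z_notin_Fq by auto

text \<open>Every element is \<open>s + t Z\<close> with \<open>t = (X - X^q) / (2 Z)\<close> and \<open>s, t \<in> F_q\<close>.\<close>
lemma card_Fq: "card (Fq q :: 'a set) = q"
proof -
  have "bij_betw (\<lambda>(s, t). s + t * Z) (Fq q \<times> Fq q) (UNIV :: 'a set)"
  proof (rule bij_betw_imageI)
    show "inj_on (\<lambda>(s, t). s + t * Z) (Fq q \<times> Fq q)"
    proof (rule inj_onI, clarify)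
      fix s t s' t' :: 'a
      assume st: "s \<in> Fq q" "t \<in> Fq q" "s' \<in> Fq q" "t' \<in> Fq q" and eq: "s + t * Z = s' + t' * Z"
      show "s = s' \<and> t = t'"
      proof (cases "t = t'")
        case False
        then have "Z = (s - s') / (t' - t)"
          using eq by (simp add: field_simps)
        then have "Z \<in> Fq q"
          using st by (simp add: Fq_divide Fq_diff)
        with Z_notin_Fq show ?thesis ..
      qed (use eq in simp)
    qed
    show "(\<lambda>(s, t). s + t * Z) ` (Fq q \<times> Fq q) = UNIV"
    proof (intro set_eqI iffI)
      fix X :: 'a
      define t where "t = (X - X^q) / (2 * Z)"
      define s where "s = X - t * Z"
      have "(2::'a)^q = 2"
        using Fq_add[OF Fq_1 Fq_1] by (simp add: Fq_iff)
      then have "t^q = (X^q - X) / (2 * - Z)"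
        by (simp add: t_def power_divide frob_diff frob_frob power_mult_distrib frob_Z)
      also have "\<dots> = t"
        by (simp add: t_def minus_divide_right[symmetric] minus_divide_left)
      finally have t: "t \<in> Fq q"
        by (simp add: Fq_iff)
      have "s^q = X^q + t * Z"
        using t by (simp add: s_def frob_diff power_mult_distrib frob_Z Fq_iff)
      also have "\<dots> = s"
        using two_neq_0 Z_neq_0 by (simp add: s_def t_def field_simps)
      finally have "s \<in> Fq q"
        by (simp add: Fq_iff)
      with t show "X \<in> (\<lambda>(s, t). s + t * Z) ` (Fq q \<times> Fq q)"
        by (auto simp: s_def intro!: image_eqI[of _ _ "(s, t)"])
    qed simp
  qed
  then have "card (Fq q \<times> Fq q :: ('a \<times> 'a) set) = q^2"
    using bij_betw_same_card card_UNIV by metis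
  then have "card (Fq q :: 'a set) ^ 2 = q^2"
    by (simp add: card_cartesian_product power2_eq_square)
  then show ?thesis
    by simp
qed

lemma card_squares_Fq: "2 * card ((\<lambda>s. s^2) ` (Fq q - {0 :: 'a})) = card (Fq q - {0 :: 'a})"
proof -
  let ?F = "Fq q - {0 :: 'a}"
  have "card ?F = (\<Sum>y\<in>(\<lambda>s. s^2) ` ?F. card {s \<in> ?F. s^2 = y})"
    using sum.image_gen[of ?F "\<lambda>_. 1 :: nat" "\<lambda>s. s^2"] by simp
  also have "\<dots> = (\<Sum>y\<in>(\<lambda>s. s^2) ` ?F. 2)"
  proof (rule sum.cong[OF refl])
    fix y
    assume "y \<in> (\<lambda>s. s^2) ` ?F"
    then obtain s where s: "s \<in> ?F" "y = s^2"
      by auto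
    then have "{s \<in> ?F. s^2 = y} = {s, - s}"
      by (auto simp: power2_eq_iff Fq_minus_iff)
    moreover have "s \<noteq> - s"
      using s neq_minus_self by auto
    ultimately show "card {s \<in> ?F. s^2 = y} = 2"
      by simp
  qed
  finally show ?thesis
    by simp
qed

text \<open>Multiplication by the non-square \<open>Z^2\<close> maps the nonzero squares of \<open>F_q\<close> onto the
  non-squares, which are therefore squares in the big field.\<close>
lemma Fq_is_square:
  assumes "e \<in> Fq q"
  shows "\<exists>\<rho>::'a. \<rho>^2 = e"
proof -
  define F where "F = Fq q - {0::'a}"
  define S where "S = (\<lambda>s. s^2) ` F"
  have "S \<subseteq> F"
    by (auto simp: S_def F_def Fq_power)
  then have card_nonsquares: "card (F - S) = card S"
    using card_squares_Fq by (simp add: F_def S_def card_Diff_subset finite_subset)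
  have Z_sq_times_squares: "(\<lambda>y. Z^2 * y) ` S = F - S"
  proof (rule card_subset_eq)
    show "(\<lambda>y. Z^2 * y) ` S \<subseteq> F - S"
    proof (rule image_subsetI)
      fix y
      assume "y \<in> S"
      then obtain s where s: "s \<in> F" "y = s^2"
        by (auto simp: S_def)
      have "Z^2 * y \<in> F"
        using s Z_sq_in_Fq Z_neq_0 by (auto simp: F_def Fq_mult Fq_power)
      moreover have "Z^2 * y \<notin> S"
      proof
        assume "Z^2 * y \<in> S"
        then obtain t where t: "t \<in> F" "Z^2 * s^2 = t^2"
          using s by (auto simp: S_def)
        then have "Z^2 = (t / s)^2"
          using s by (auto simp: F_def power_divide field_simps)
        moreover have "t / s \<in> Fq q"
          using s t by (auto simp: F_def Fq_divide)
        ultimately show False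
          using Z_notin_Fq by (auto simp: power2_eq_iff Fq_minus_iff)
      qed
      ultimately show "Z^2 * y \<in> F - S"
        by simp
    qed
    have "inj_on (\<lambda>y. Z^2 * y) S"
      using Z_neq_0 by (auto intro: inj_onI)
    then show "card ((\<lambda>y. Z^2 * y) ` S) = card (F - S)"
      using card_nonsquares by (simp add: card_image)
  qed simp
  have "\<exists>\<rho>. \<rho>^2 = e" if "e \<in> F - S"
  proof -
    from that have "e \<in> (\<lambda>y. Z^2 * y) ` S"
      by (simp only: Z_sq_times_squares)
    then obtain s where "e = Z^2 * s^2"
      by (auto simp: S_def)
    then show ?thesis
      by (intro exI[of _ "Z * s"]) (simp add: power_mult_distrib)
  qed
  moreover have "e \<in> S \<Longrightarrow> \<exists>\<rho>. \<rho>^2 = e"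
    by (auto simp: S_def)
  ultimately show ?thesis
    using assms by (cases "e = 0") (auto simp: F_def)
qed

section \<open>Counting the solutions of \<open>\<beta>\<close>\<close>

lemma add_one_add_one: "X + 1 + 1 = (X::'a) - 1"
  using two_eq_minus_one by (simp add: add.assoc one_add_one)

lemma cube_diff: "(X - Y)^3 = X^3 - (Y::'a)^3"
  using cube_add_char3[OF char_three, of X "- Y"] by simp

lemma cube_inj: "X^3 = Y^3 \<Longrightarrow> X = (Y::'a)"
  using cube_diff[of X Y] by simp

definition H :: "'a \<Rightarrow> 'a" where
  "H X = X^q * X - X^2"

definition P :: "'a \<Rightarrow> 'a" where
  "P X = X^2 * X^q + X^q - X"

lemma shift_power_diff: "(X + 1)^(q+2) - (X - 1)^(q+2) = H X - 1"
  and shift_power_sum: "(X + 1)^(q+2) + (X - 1)^(q+2) = - P X"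
proof -
  have plus: "(X + 1)^(q+2) = (X^q + 1) * (X + 1)^2"
    and minus: "(X - 1)^(q+2) = (X^q - 1) * (X - 1)^2"
    by (simp_all only: power_add frob_add frob_diff power_one)
  show "(X + 1)^(q+2) - (X - 1)^(q+2) = H X - 1"
    unfolding plus minus H_def
    by (rule char3_eqI[OF char_three, where c = "X^q * X + X^2 + 1"]) algebra
  show "(X + 1)^(q+2) + (X - 1)^(q+2) = - P X"
    unfolding plus minus P_def
    by (rule char3_eqI[OF char_three, where c = "X^q * X^2 + X^q + X"]) algebra
qed

lemma H_eq_iff: "H X = H Y \<longleftrightarrow> (X \<in> Fq q \<and> Y \<in> Fq q) \<or> X = Y \<or> Y = - X"
proof
  assume eq: "H X = H Y"
  have "H W + (H W)^q = - ((W - W^q)^2)" for W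
  proof -
    have "(H W)^q = W * W^q - (W^q)^2"
      by (simp add: H_def frob_diff power_mult_distrib frob_frob frob_power[of W 2])
    then show ?thesis
      by (simp add: H_def algebra_simps power2_eq_square)
  qed
  then have "(X - X^q)^2 = (Y - Y^q)^2"
    using eq by (metis minus_equation_iff)
  then have cases: "X - X^q = Y - Y^q \<or> X - X^q = - (Y - Y^q)"
    by (simp only: power2_eq_iff)
  have prod: "X * (X - X^q) = Y * (Y - Y^q)"
    using eq by (simp add: H_def algebra_simps power2_eq_square)
  show "(X \<in> Fq q \<and> Y \<in> Fq q) \<or> X = Y \<or> Y = - X"
  proof (cases "Y - Y^q = X - X^q")
    case True
    then have "(X - Y) * (X - X^q) = 0"
      using prod by (simp add: left_diff_distrib)
    then show ?thesis
      using True by (auto simp: Fq_iff)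
  next
    case False
    then have opp: "Y - Y^q = - (X - X^q)"
      using cases by (metis minus_minus)
    then have "X * (X - X^q) = - (Y * (X - X^q))"
      using prod by (simp add: right_diff_distrib)
    then have "(X + Y) * (X - X^q) = 0"
      by (simp add: distrib_right eq_neg_iff_add_eq_0)
    then show ?thesis
      using opp by (auto simp: Fq_iff eq_neg_iff_add_eq_0 add.commute)
  qed
next
  show "(X \<in> Fq q \<and> Y \<in> Fq q) \<or> X = Y \<or> Y = - X \<Longrightarrow> H X = H Y"
    by (auto simp: H_def Fq_iff power2_eq_square frob_minus)
qed

lemma P_Fq: "X \<in> Fq q \<Longrightarrow> P X = X^3"
  by (simp add: P_def Fq_iff power2_eq_square power3_eq_cube)

lemma P_minus: "P (- X) = - P X"
  by (simp add: P_def frob_minus)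

lemma frob_P: "(P X)^q = (X^q)^2 * X + X - X^q"
  by (simp add: P_def frob_add frob_diff power_mult_distrib frob_frob frob_power[of X 2])

lemma shifted_pair_iff:
  assumes "b \<noteq> 0"
  shows "((X + 1)^(q+2) - (Y + 1)^(q+2) = b \<and> (X - 1)^(q+2) - (Y - 1)^(q+2) = b) \<longleftrightarrow>
    (X \<in> Fq q \<and> Y \<in> Fq q \<and> (X - Y)^3 = b) \<or> (X \<notin> Fq q \<and> Y = - X \<and> P X = - b)"
proof -
  have "(- P X) - (- P Y) = 2 * b \<longleftrightarrow> - (P X - P Y) = - b"
    by (simp add: two_eq_minus_one)
  then have "(- P X) - (- P Y) = 2 * b \<longleftrightarrow> P X - P Y = b"
    by (simp only: neg_equal_iff_equal)
  then have "((X + 1)^(q+2) - (Y + 1)^(q+2) = b \<and> (X - 1)^(q+2) - (Y - 1)^(q+2) = b) \<longleftrightarrow>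
      H X = H Y \<and> P X - P Y = b"
    unfolding both_diffs_eq_iff[OF two_neq_0] shift_power_diff shift_power_sum by simp
  also have "\<dots> \<longleftrightarrow> (X \<in> Fq q \<and> Y \<in> Fq q \<and> (X - Y)^3 = b) \<or> (X \<notin> Fq q \<and> Y = - X \<and> P X = - b)"
  proof -
    have "P X - P (- X) = - P X"
      using two_eq_minus_one by (simp add: P_minus flip: mult_2)
    then have "P X - P (- X) = b \<longleftrightarrow> - P X = b"
      by (simp only:)
    also have "\<dots> \<longleftrightarrow> P X = - b"
      by auto
    finally have "P X - P (- X) = b \<longleftrightarrow> P X = - b" .
    then show ?thesis
      unfolding H_eq_iff using assms by (auto simp: P_Fq cube_diff Fq_minus_iff)
  qed
  finally show ?thesis .
qed

lemma card_Fq_pairs_cube_diff: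
  fixes b :: 'a
  shows "card {(X, Y). X \<in> Fq q \<and> Y \<in> Fq q \<and> (X - Y)^3 = b} = (if b \<in> Fq q then q else 0)"
proof (cases "b \<in> Fq q")
  case True
  have "(\<lambda>x::'a. x^3) ` Fq q = Fq q"
    by (rule endo_inj_surj) (auto simp: Fq_power intro: inj_onI cube_inj)
  then have "b \<in> (\<lambda>x::'a. x^3) ` Fq q"
    using True by (simp only:)
  then obtain e where e: "e \<in> Fq q" "e^3 = b"
    by auto
  then have "(X - Y)^3 = b \<longleftrightarrow> Y = X - e" for X Y
    using cube_inj[of "X - Y" e] by auto
  then have "{(X, Y). X \<in> Fq q \<and> Y \<in> Fq q \<and> (X - Y)^3 = b} = (\<lambda>X. (X, X - e)) ` Fq q"
    using e by (auto simp: Fq_diff)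
  then show ?thesis
    using True by (simp add: card_image inj_on_def card_Fq)
next
  case False
  then show ?thesis
    by (auto simp: Fq_power Fq_diff)
qed

lemma beta_eq:
  assumes "b \<noteq> 0"
  shows "beta_f (\<lambda>x::'a. x^(q+2)) 1 b =
    (if b \<in> Fq q then q else 0) + card {X. X \<notin> Fq q \<and> P X = - b}"
proof -
  define T1 where "T1 = {(X, Y). X \<in> Fq q \<and> Y \<in> Fq q \<and> (X - Y)^3 = b}"
  define T2 where "T2 = (\<lambda>X. (X, - X)) ` {X. X \<notin> Fq q \<and> P X = - b}"
  define Sol where
    "Sol = {(x, y). x^(q+2) - y^(q+2) = b \<and> (x + 1)^(q+2) - (y + 1)^(q+2) = b}"
  have Sol_iff: "(X + 1, Y + 1) \<in> Sol \<longleftrightarrow> (X, Y) \<in> T1 \<union> T2" for X Y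
  proof -
    have "(X + 1, Y + 1) \<in> Sol \<longleftrightarrow>
        (X + 1)^(q+2) - (Y + 1)^(q+2) = b \<and> (X - 1)^(q+2) - (Y - 1)^(q+2) = b"
      by (simp only: Sol_def mem_Collect_eq prod.case add_one_add_one)
    then show ?thesis
      unfolding shifted_pair_iff[OF assms] by (auto simp: T1_def T2_def)
  qed
  have "bij_betw (\<lambda>(X, Y). (X + 1, Y + 1)) (T1 \<union> T2) Sol"
  proof (rule bij_betw_byWitness[where f' = "\<lambda>(x, y). (x - 1, y - 1)"])
    show "(\<lambda>(X, Y). (X + 1, Y + 1)) ` (T1 \<union> T2) \<subseteq> Sol"
      using Sol_iff by auto
    show "(\<lambda>(x, y). (x - 1, y - 1)) ` Sol \<subseteq> T1 \<union> T2"
      using Sol_iff[of "_ - 1" "_ - 1"] by auto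
  qed auto
  then have "beta_f (\<lambda>x::'a. x^(q+2)) 1 b = card (T1 \<union> T2)"
    by (simp add: beta_f_def Sol_def bij_betw_same_card)
  also have "\<dots> = card T1 + card T2"
    by (rule card_Un_disjoint) (auto simp: T1_def T2_def)
  also have "card T2 = card {X. X \<notin> Fq q \<and> P X = - b}"
    unfolding T2_def by (rule card_image) (auto intro: inj_onI)
  finally show ?thesis
    by (simp add: T1_def card_Fq_pairs_cube_diff)
qed

section \<open>The values of \<open>\<beta>\<close> at \<open>c\<close>, \<open>d Z\<close> and \<open>c + d Z\<close>\<close>

lemma P_eq_norm_trace: "P X = X * (X * X^q) + X^q - X"
  by (simp add: P_def power2_eq_square algebra_simps)

lemma P_eq_minus_Fq_iff:
  assumes c: "c \<in> Fq q" and X: "X \<notin> Fq q"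
  shows "P X = - c \<longleftrightarrow> (X - c)^2 = c^2 + 1"
proof -
  have X_ne: "X - X^q \<noteq> 0"
    using X by (simp add: Fq_iff)
  have P_trace: "P X = X + X^q" if "X * X^q = -1"
    unfolding P_eq_norm_trace that
    by (rule char3_eqI[OF char_three, where c = "- X"]) algebra
  have "P X = - c \<longleftrightarrow> X + X^q = - c \<and> X * X^q = -1"
  proof
    assume P: "P X = - c"
    then have "P X - (P X)^q = 0"
      using c by (simp add: Fq_iff frob_minus)
    moreover have "P X - (P X)^q = (X - X^q) * (X * X^q + 1)"
      unfolding frob_P by (rule char3_eqI[OF char_three, where c = "X^q - X"]) (simp add: P_def, algebra)
    ultimately have "X * X^q = -1"
      using X_ne by (simp add: eq_neg_iff_add_eq_0)
    with P P_trace show "X + X^q = - c \<and> X * X^q = -1"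
      by simp
  qed (use P_trace in simp)
  also have "\<dots> \<longleftrightarrow> X^2 + c * X - 1 = 0"
  proof
    have quad: "X^2 + c * X - 1 = - (X * X^q) - 1 + X * (X + X^q + c)"
      by algebra
    show "X + X^q = - c \<and> X * X^q = -1 \<Longrightarrow> X^2 + c * X - 1 = 0"
      unfolding quad by simp
    assume root: "X^2 + c * X - 1 = 0"
    then have "(X^2 + c * X - 1)^q = 0"
      using q_pos by simp
    then have "(X^q)^2 + c * X^q - 1 = 0"
      using c by (simp add: frob_add frob_diff power_mult_distrib frob_power[of X 2] Fq_iff)
    moreover have "(X - X^q) * (X + X^q + c) = (X^2 + c * X - 1) - ((X^q)^2 + c * X^q - 1)"
      by algebra
    ultimately have trace: "X + X^q + c = 0"
      using root X_ne by simp
    then have "- (X * X^q) - 1 = 0"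
      using root unfolding quad by simp
    then have "X * X^q = -1"
      by (metis minus_equation_iff eq_iff_diff_eq_0)
    with trace show "X + X^q = - c \<and> X * X^q = -1"
      by (simp add: eq_neg_iff_add_eq_0)
  qed
  also have "\<dots> \<longleftrightarrow> (X - c)^2 = c^2 + 1"
  proof -
    have "(X - c)^2 - (c^2 + 1) = X^2 + c * X - 1"
      by (rule char3_eqI[OF char_three, where c = "- c * X"]) algebra
    then show ?thesis
      by (metis eq_iff_diff_eq_0)
  qed
  finally show ?thesis .
qed

lemma card_sqrt_notin_Fq:
  assumes e: "e \<in> Fq q"
  shows "card {\<rho>::'a. \<rho> \<notin> Fq q \<and> \<rho>^2 = e} = (if e \<in> C1 q then 2 else 0)"
proof (cases "e \<in> C1 q")
  case True
  obtain \<rho> :: 'a where \<rho>: "\<rho>^2 = e"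
    using Fq_is_square[OF e] by blast
  have "e \<noteq> 0" "e \<notin> C0 q"
    using True by (auto simp: C1_def)
  then have "\<rho> \<notin> Fq q" "\<rho> \<noteq> 0"
    using \<rho> e by (auto simp: C0_def)
  then have "{\<rho>'. \<rho>' \<notin> Fq q \<and> \<rho>'^2 = e} = {\<rho>, - \<rho>}"
    using \<rho> by (auto simp: power2_eq_iff Fq_minus_iff)
  then show ?thesis
    using True neq_minus_self[OF \<open>\<rho> \<noteq> 0\<close>] by simp
next
  case False
  have "\<rho> \<in> Fq q" if "\<rho>^2 = e" for \<rho> :: 'a
  proof (cases "e = 0")
    case False
    with \<open>e \<notin> C1 q\<close> e obtain y where "y \<in> Fq q" "y^2 = e"
      by (auto simp: C1_def C0_def)
    then show ?thesis
      using that by (auto simp: power2_eq_iff Fq_minus_iff)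
  qed (use that in simp)
  then show ?thesis
    using False by auto
qed

lemma beta_Fq:
  assumes c: "c \<in> Fq q" "c \<noteq> 0"
  shows "beta_f (\<lambda>x::'a. x^(q+2)) 1 (c / 4) = (if c^2 + 1 \<in> C1 q then q + 2 else q)"
proof -
  have "{X. X \<notin> Fq q \<and> P X = - c} = (\<lambda>\<rho>. c + \<rho>) ` {\<rho>. \<rho> \<notin> Fq q \<and> \<rho>^2 = c^2 + 1}"
  proof (intro set_eqI iffI)
    fix X
    assume "X \<in> {X. X \<notin> Fq q \<and> P X = - c}"
    then have "X - c \<in> {\<rho>. \<rho> \<notin> Fq q \<and> \<rho>^2 = c^2 + 1}"
      using P_eq_minus_Fq_iff[OF c(1)] c(1) Fq_add[of "X - c" c] by auto
    then show "X \<in> (\<lambda>\<rho>. c + \<rho>) ` {\<rho>. \<rho> \<notin> Fq q \<and> \<rho>^2 = c^2 + 1}"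
      by (auto intro: image_eqI[of _ _ "X - c"])
  next
    fix X
    assume "X \<in> (\<lambda>\<rho>. c + \<rho>) ` {\<rho>. \<rho> \<notin> Fq q \<and> \<rho>^2 = c^2 + 1}"
    then obtain \<rho> where "X = c + \<rho>" "\<rho> \<notin> Fq q" "\<rho>^2 = c^2 + 1"
      by auto
    moreover have "X \<notin> Fq q"
      using c(1) Fq_diff[of X c] \<open>\<rho> \<notin> Fq q\<close> \<open>X = c + \<rho>\<close> by auto
    ultimately show "X \<in> {X. X \<notin> Fq q \<and> P X = - c}"
      using P_eq_minus_Fq_iff[OF c(1)] by auto
  qed
  then have "card {X. X \<notin> Fq q \<and> P X = - c} = (if c^2 + 1 \<in> C1 q then 2 else 0)"
    using card_sqrt_notin_Fq[of "c^2 + 1"] c(1)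
    by (simp add: card_image inj_on_def Fq_add Fq_power)
  then show ?thesis
    using beta_eq[OF c(2)] c(1) four_eq_one by simp
qed

lemma antifixed_cube_diff_eq_self:
  assumes "T^q = - T" "T^3 = (T::'a)"
  shows "T = 0"
proof -
  have "T * ((T - 1) * (T + 1)) = 0"
    using assms(2) by (simp add: algebra_simps power3_eq_cube)
  then have "T = 0 \<or> T = 1 \<or> T = -1"
    by (auto simp: eq_neg_iff_add_eq_0)
  moreover have "(1::'a) \<noteq> -1"
    using neq_minus_self[of 1] by simp
  ultimately show ?thesis
    using assms(1) by (auto simp: frob_minus)
qed

lemma bij_cube_minus_self_antifixed:
  "bij_betw (\<lambda>X. X^3 - X) {X::'a. X^q = - X} {X. X^q = - X}"
proof -
  let ?A = "{X::'a. X^q = - X}"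
  have "inj_on (\<lambda>X. X^3 - X) ?A"
  proof (rule inj_onI)
    fix X Y
    assume "X \<in> ?A" "Y \<in> ?A" "X^3 - X = Y^3 - Y"
    then have "(X - Y)^q = - (X - Y)" "(X - Y)^3 = X - Y"
      by (simp_all add: frob_diff cube_diff algebra_simps)
    then have "X - Y = 0"
      by (rule antifixed_cube_diff_eq_self)
    then show "X = Y"
      by simp
  qed
  moreover have "(\<lambda>X. X^3 - X) ` ?A \<subseteq> ?A"
    by (auto simp: frob_diff frob_power[of _ 3] power_minus_odd)
  ultimately show ?thesis
    by (simp add: bij_betw_def endo_inj_surj)
qed

lemma P_eq_minus_antifixed_iff:
  assumes b: "b^q = - b" "b \<noteq> 0"
  shows "X \<notin> Fq q \<and> P X = - b \<longleftrightarrow> X^q = - X \<and> X^3 - X = b"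
proof -
  have P_antifixed: "P X = - (X^3 - X)" if "X^q = - X"
    using that two_eq_minus_one by (simp add: P_def power2_eq_square power3_eq_cube algebra_simps flip: mult_2)
  show ?thesis
  proof
    assume X: "X \<notin> Fq q \<and> P X = - b"
    have "P X + (P X)^q = X * X^q * (X + X^q)"
      unfolding frob_P by (simp add: P_def algebra_simps power2_eq_square)
    moreover have "P X + (P X)^q = 0"
      using X b by (simp add: frob_minus)
    moreover have "X \<noteq> 0"
      using X by auto
    ultimately have "X^q = - X"
      using frob_eq_0_iff by (simp add: eq_neg_iff_add_eq_0 add.commute)
    moreover from this have "X^3 - X = b"
      using X P_antifixed by (metis neg_equal_iff_equal)
    ultimately show "X^q = - X \<and> X^3 - X = b" ..
  next
    assume X: "X^q = - X \<and> X^3 - X = b"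
    then have "X \<noteq> 0"
      using b by auto
    then have "X \<notin> Fq q"
      using X neq_minus_self by (auto simp: Fq_iff)
    then show "X \<notin> Fq q \<and> P X = - b"
      using X P_antifixed by simp
  qed
qed

lemma beta_Fq_Z:
  assumes d: "d \<in> Fq q" "d \<noteq> 0"
  shows "beta_f (\<lambda>x::'a. x^(q+2)) 1 (d * Z / 4) = 1"
proof -
  define b where "b = d * Z"
  have b: "b^q = - b" "b \<noteq> 0"
    using d Z_neq_0 by (simp_all add: b_def power_mult_distrib frob_Z Fq_iff)
  then have "b \<notin> Fq q"
    using neq_minus_self by (auto simp: Fq_iff)
  have "{X. X \<notin> Fq q \<and> P X = - b} = {X. X^q = - X \<and> X^3 - X = b}"
    using P_eq_minus_antifixed_iff[OF b] by blast
  also obtain X0 where "{X. X^q = - X \<and> X^3 - X = b} = {X0}"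
  proof -
    note bij = bij_cube_minus_self_antifixed
    have "b \<in> (\<lambda>X. X^3 - X) ` {X. X^q = - X}"
      using b(1) bij_betw_imp_surj_on[OF bij] by simp
    then obtain X0 where "X0^q = - X0" "X0^3 - X0 = b"
      by auto
    moreover have "inj_on (\<lambda>X. X^3 - X) {X::'a. X^q = - X}"
      using bij by (rule bij_betw_imp_inj_on)
    ultimately have "{X. X^q = - X \<and> X^3 - X = b} = {X0}"
      by (auto simp: inj_on_def)
    then show ?thesis
      using that by blast
  qed
  finally show ?thesis
    using beta_eq[OF b(2)] \<open>b \<notin> Fq q\<close> four_eq_one by (simp add: b_def)
qed

lemma norm_of_P_solution:
  assumes w: "w \<notin> Fq q" and X: "P X = w"
  defines "n \<equiv> X * X^q"
  shows "n \<noteq> 0" "n + 1 \<noteq> 0" "n * (n + 1) * X = (n - 1) * w - w^q"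
    "quintic ((w + w^q)^2) ((w - w^q)^2) n = 0"
proof -
  have "P 0 = 0"
    using q_pos by (simp add: P_def)
  then have "X \<noteq> 0"
    using w X by auto
  then show "n \<noteq> 0"
    by (simp add: n_def frob_eq_0_iff)
  have e1: "(n - 1) * X + X^q = w"
    using X by (simp add: P_eq_norm_trace n_def algebra_simps)
  have e2: "(n - 1) * X^q + X = w^q"
    using X frob_P[of X] by (simp add: n_def algebra_simps power2_eq_square)
  show "n + 1 \<noteq> 0"
  proof
    assume "n + 1 = 0"
    have "n - 1 = (n + 1) - 2"
      by simp
    also have "\<dots> = 1"
      using \<open>n + 1 = 0\<close> two_eq_minus_one by simp
    finally have "w = X + X^q"
      using e1 by simp
    then show False
      using w trace_in_Fq by simp
  qed
  have solve: "n * (n + 1) * Y = (n - 1) * u - v"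
    if "(n - 1) * Y + Y' = u" "(n - 1) * Y' + Y = v" for Y Y' u v
    unfolding that[symmetric]
    by (rule char3_eqI[OF char_three, where c = "n * Y"]) algebra
  show M: "n * (n + 1) * X = (n - 1) * w - w^q"
    using e1 e2 by (rule solve)
  have Mq: "n * (n + 1) * X^q = (n - 1) * w^q - w"
    using e2 e1 by (rule solve)
  have "(n * (n + 1))^2 * n = (n * (n + 1) * X) * (n * (n + 1) * X^q)"
    by (simp add: n_def power2_eq_square algebra_simps)
  also have "\<dots> = (n + 1)^2 * (w + w^q)^2 - n^2 * (w - w^q)^2"
    unfolding M Mq by (rule conj_linear_prod_char3[OF char_three])
  finally show "quintic ((w + w^q)^2) ((w - w^q)^2) n = 0"
    unfolding quintic_char3[OF char_three] by (simp add: algebra_simps power2_eq_square power3_eq_cube)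
qed

lemma P_solution_of_norm:
  assumes w: "w \<notin> Fq q" and trace: "w + w^q \<noteq> 0"
    and n: "n \<in> Fq q" "quintic ((w + w^q)^2) ((w - w^q)^2) n = 0"
  defines "X \<equiv> ((n - 1) * w - w^q) / (n * (n + 1))"
  shows "X \<notin> Fq q" "P X = w" "X * X^q = n"
proof -
  define A B where "A = (w + w^q)^2" and "B = (w - w^q)^2"
  have A: "A \<noteq> 0"
    using trace by (simp add: A_def)
  have B: "B \<noteq> 0"
    using w by (simp add: B_def Fq_iff)
  have root: "n^3 * (n + 1)^2 - A * (n + 1)^2 + B * n^2 = 0"
    using n(2) by (simp add: quintic_char3[OF char_three] A_def B_def)
  have "n \<noteq> 0"
    using root A by auto
  moreover have "n + 1 \<noteq> 0"
  proof
    assume "n + 1 = 0"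
    then have "B * n^2 = 0"
      using root by simp
    with B \<open>n + 1 = 0\<close> show False
      by simp
  qed
  ultimately have d: "n * (n + 1) \<noteq> 0"
    by simp
  define M M' where "M = (n - 1) * w - w^q" and "M' = (n - 1) * w^q - w"
  have "n^q = n"
    using n(1) by (simp add: Fq_iff)
  then have "(n * (n + 1))^q = n * (n + 1)" "M^q = M'"
    by (simp_all add: M_def M'_def frob_add frob_diff power_mult_distrib frob_frob)
  have Xd: "X = M / (n * (n + 1))"
    by (simp add: X_def M_def)
  then have Xq: "X^q = M' / (n * (n + 1))"
    using \<open>M^q = M'\<close> \<open>(n * (n + 1))^q = n * (n + 1)\<close> by (simp add: power_divide)
  have "M * M' = (n + 1)^2 * A - n^2 * B"
    unfolding M_def M'_def A_def B_def by (rule conj_linear_prod_char3[OF char_three])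
  also have "\<dots> = (n * (n + 1))^2 * n"
    using root by (simp add: algebra_simps power2_eq_square power3_eq_cube)
  finally have "M * M' = (n * (n + 1))^2 * n" .
  moreover have "X * X^q = (M * M') / (n * (n + 1))^2"
    unfolding Xq by (simp add: Xd power2_eq_square)
  ultimately show norm: "X * X^q = n"
    using d by simp
  have "(n - 1) * M + M' = n * (n + 1) * w"
    unfolding M_def M'_def by (rule char3_eqI[OF char_three, where c = "- (n * w)"]) algebra
  moreover have "(n - 1) * X + X^q = ((n - 1) * M + M') / (n * (n + 1))"
    unfolding Xq by (simp add: Xd add_divide_distrib)
  ultimately have "(n - 1) * X + X^q = w"
    using d by simp
  then show PX: "P X = w"
    by (simp add: P_eq_norm_trace norm algebra_simps)
  show "X \<notin> Fq q"
    using PX w by (auto simp: P_Fq Fq_power)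
qed

lemma card_P_solutions:
  assumes w: "w \<notin> Fq q" and trace: "w + w^q \<noteq> 0"
  shows "card {X. X \<notin> Fq q \<and> P X = w} =
    card {n \<in> Fq q. quintic ((w + w^q)^2) ((w - w^q)^2) n = 0}"
proof (rule bij_betw_same_card[of "\<lambda>X. X * X^q"], rule bij_betw_imageI)
  show "inj_on (\<lambda>X. X * X^q) {X. X \<notin> Fq q \<and> P X = w}"
  proof (rule inj_onI)
    fix X Y
    assume "X \<in> {X. X \<notin> Fq q \<and> P X = w}" "Y \<in> {X. X \<notin> Fq q \<and> P X = w}"
      and eq: "X * X^q = Y * Y^q"
    then have "(X * X^q) * (X * X^q + 1) * X = (X * X^q) * (X * X^q + 1) * Y"
      using norm_of_P_solution(3)[OF w, of X] norm_of_P_solution(3)[OF w, of Y] by simp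
    then show "X = Y"
      using norm_of_P_solution(1,2)[OF w, of X] \<open>X \<in> _\<close> by simp
  qed
  show "(\<lambda>X. X * X^q) ` {X. X \<notin> Fq q \<and> P X = w} =
      {n \<in> Fq q. quintic ((w + w^q)^2) ((w - w^q)^2) n = 0}"
  proof (intro set_eqI iffI)
    fix n
    assume "n \<in> (\<lambda>X. X * X^q) ` {X. X \<notin> Fq q \<and> P X = w}"
    then show "n \<in> {n \<in> Fq q. quintic ((w + w^q)^2) ((w - w^q)^2) n = 0}"
      using norm_of_P_solution(4)[OF w] norm_in_Fq by auto
  next
    fix n
    assume "n \<in> {n \<in> Fq q. quintic ((w + w^q)^2) ((w - w^q)^2) n = 0}"
    then show "n \<in> (\<lambda>X. X * X^q) ` {X. X \<notin> Fq q \<and> P X = w}"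
      using P_solution_of_norm[OF w trace, of n] by (auto intro!: image_eqI)
  qed
qed

lemma pair_in_Fq_if_diff_prod5_in_Fq:
  fixes r1 r2 r3 r4 r5 :: 'a
  assumes r: "r1 \<in> Fq q" "r2 \<in> Fq q" "r3 \<in> Fq q"
    and sum: "r4 + r5 \<in> Fq q" and prod: "r4 * r5 \<in> Fq q"
    and \<Delta>: "diff_prod5 r1 r2 r3 r4 r5 \<in> Fq q" "diff_prod5 r1 r2 r3 r4 r5 \<noteq> 0"
  shows "r4 \<in> Fq q" "r5 \<in> Fq q"
proof -
  define W where "W = (r1 - r2) * (r1 - r3) * (r2 - r3)
    * ((r1 - r4) * (r1 - r5)) * ((r2 - r4) * (r2 - r5)) * ((r3 - r4) * (r3 - r5))"
  have W: "diff_prod5 r1 r2 r3 r4 r5 = (r4 - r5) * W"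
    by (simp add: diff_prod5_def W_def ac_simps)
  have "(r - r4) * (r - r5) = r^2 - (r4 + r5) * r + r4 * r5" for r
    by (simp add: algebra_simps power2_eq_square)
  then have "W \<in> Fq q"
    unfolding W_def using r sum prod by (simp add: Fq_mult Fq_diff Fq_add Fq_power)
  moreover have "W \<noteq> 0"
    using W \<Delta>(2) by auto
  ultimately have "r4 - r5 \<in> Fq q"
    using W \<Delta>(1) Fq_divide[of "diff_prod5 r1 r2 r3 r4 r5" W] by simp
  then have "(r4 + r5) + (r4 - r5) \<in> Fq q"
    using sum by (rule Fq_add[rotated])
  moreover have "(r4 + r5) + (r4 - r5) = 2 * r4"
    unfolding mult_2 by simp
  ultimately have "2 * r4 \<in> Fq q"
    by simp
  moreover have "(2::'a) \<in> Fq q"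
    using Fq_add[OF Fq_1 Fq_1] by (simp only: one_add_one)
  ultimately have "2 * r4 / 2 \<in> Fq q"
    by (rule Fq_divide)
  then have "r4 \<in> Fq q"
    using two_neq_0 by simp
  moreover have "r5 = (r4 + r5) - r4"
    by simp
  ultimately show "r4 \<in> Fq q" "r5 \<in> Fq q"
    using Fq_diff[OF sum] by metis+
qed

text \<open>The two missing roots are \<open>u \<mp> \<rho>\<close> with \<open>u, \<rho>^2 \<in> F_q\<close>; the relation
  \<open>\<Delta>^2 B = c^2 B^5\<close> for their difference product \<open>\<Delta>\<close> puts \<open>\<Delta>\<close>, and with it \<open>\<rho>\<close>, in \<open>F_q\<close>.\<close>
lemma quintic_three_roots_imp_five:
  fixes c B :: 'a
  assumes c: "c \<in> Fq q" "c \<noteq> 0" and B: "B \<in> Fq q" "B \<noteq> 0"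
    and r: "r1 \<in> Fq q" "r2 \<in> Fq q" "r3 \<in> Fq q"
    and roots: "quintic (c^2) B r1 = 0" "quintic (c^2) B r2 = 0" "quintic (c^2) B r3 = 0"
    and distinct: "r1 \<noteq> r2" "r1 \<noteq> r3" "r2 \<noteq> r3"
  shows "card {n \<in> Fq q. quintic (c^2) B n = 0} = 5"
proof -
  define u where "u = r1 + r2 + r3 - 1"
  define v where "v = 1 + (r1 + r2 + r3) * u - (r1 * r2 + r1 * r3 + r2 * r3)"
  have uv: "u \<in> Fq q" "v \<in> Fq q"
    using r by (simp_all add: u_def v_def Fq_add Fq_diff Fq_mult)
  obtain \<rho> where \<rho>: "\<rho>^2 = u^2 - v"
    using Fq_is_square uv by (meson Fq_diff Fq_power)
  define r4 r5 where "r4 = u - \<rho>" and "r5 = u + \<rho>"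
  have sum: "r4 + r5 = - u"
    using two_eq_minus_one by (simp add: r4_def r5_def flip: mult_2)
  have prod: "r4 * r5 = v"
    using \<rho> by (simp add: r4_def r5_def algebra_simps power2_eq_square)
  have vieta: "vieta_quintic (c^2) B r1 r2 r3 r4 r5"
    by (rule vieta_quintic_if_three_roots[OF distinct roots])
      (simp_all add: sum prod u_def v_def algebra_simps)
  define \<Delta> where "\<Delta> = diff_prod5 r1 r2 r3 r4 r5"
  have "\<Delta>^2 * B = B * (c * B^2)^2"
    using quintic_diff_prod5_sq[OF char_three vieta]
    by (simp add: \<Delta>_def algebra_simps power2_eq_square power3_eq_cube numeral_eq_Suc)
  then have "\<Delta>^2 = (c * B^2)^2"
    using B(2) by simp
  then have "\<Delta> = c * B^2 \<or> \<Delta> = - (c * B^2)"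
    by (simp only: power2_eq_iff)
  then have \<Delta>: "\<Delta> \<in> Fq q" "\<Delta> \<noteq> 0"
    using c B by (auto simp: Fq_mult Fq_power Fq_minus_iff)
  moreover have "r4 + r5 \<in> Fq q" "r4 * r5 \<in> Fq q"
    using uv by (simp_all add: sum prod Fq_minus_iff)
  ultimately have "r4 \<in> Fq q" "r5 \<in> Fq q"
    using pair_in_Fq_if_diff_prod5_in_Fq[OF r] unfolding \<Delta>_def by blast+
  then have "{n \<in> Fq q. quintic (c^2) B n = 0} = {r1, r2, r3, r4, r5}"
    using r by (auto simp: quintic_eq_prod_if_vieta[OF vieta])
  moreover have "distinct [r1, r2, r3, r4, r5]"
    using \<Delta> by (auto simp: \<Delta>_def diff_prod5_def)
  then have "card (set [r1, r2, r3, r4, r5]) = 5"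
    by (subst distinct_card) simp_all
  ultimately show ?thesis
    by simp
qed

lemma card_quintic_roots_Fq:
  fixes c B :: 'a
  assumes "c \<in> Fq q" "c \<noteq> 0" "B \<in> Fq q" "B \<noteq> 0"
  shows "card {n \<in> Fq q. quintic (c^2) B n = 0} \<in> {0, 1, 2, 5}"
proof (cases "card {n \<in> Fq q. quintic (c^2) B n = 0} \<ge> 3")
  case True
  then obtain T where "T \<subseteq> {n \<in> Fq q. quintic (c^2) B n = 0}" "card T = 3"
    by (meson obtain_subset_with_card_n)
  then obtain r1 r2 r3 where "r1 \<in> Fq q" "r2 \<in> Fq q" "r3 \<in> Fq q"
    "quintic (c^2) B r1 = 0" "quintic (c^2) B r2 = 0" "quintic (c^2) B r3 = 0"
    "r1 \<noteq> r2" "r1 \<noteq> r3" "r2 \<noteq> r3"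
    by (auto simp: card_3_iff)
  then show ?thesis
    using quintic_three_roots_imp_five assms by simp
next
  case False
  then show ?thesis
    by (simp del: card_0_eq) arith
qed

lemma beta_Fq_plus_Z:
  assumes c: "c \<in> Fq q" "c \<noteq> 0" and d: "d \<in> Fq q" "d \<noteq> 0"
  shows "beta_f (\<lambda>x::'a. x^(q+2)) 1 ((c + d * Z) / 4) \<in> {0, 1, 2, 5}"
proof -
  define b w where "b = c + d * Z" and "w = - b"
  have wq: "w^q = d * Z - c"
    using c d by (simp add: w_def b_def frob_add frob_diff frob_minus power_mult_distrib frob_Z Fq_iff)
  have "w^q - w = 2 * (d * Z)"
    unfolding wq unfolding w_def b_def by algebra
  then have "w \<noteq> w^q"
    using d Z_neq_0 two_neq_0 by auto
  then have w: "w \<notin> Fq q"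
    by (simp add: Fq_iff)
  then have "b \<notin> Fq q"
    by (simp add: w_def Fq_minus_iff)
  moreover from this have "b \<noteq> 0"
    by auto
  ultimately have "beta_f (\<lambda>x::'a. x^(q+2)) 1 ((c + d * Z) / 4) = card {X. X \<notin> Fq q \<and> P X = w}"
    using beta_eq[of b] four_eq_one by (simp add: w_def b_def)
  also have "w + w^q = - (2 * c)"
    unfolding wq unfolding w_def b_def by algebra
  then have "w + w^q = c"
    by (simp add: two_eq_minus_one)
  then have "card {X. X \<notin> Fq q \<and> P X = w} = card {n \<in> Fq q. quintic (c^2) ((w - w^q)^2) n = 0}"
    using card_P_solutions[OF w] c(2) by simp
  also have "\<dots> \<in> {0, 1, 2, 5}"
  proof (rule card_quintic_roots_Fq[OF c])
    show "(w - w^q)^2 \<in> Fq q"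
      by (simp add: Fq_iff frob_power[of _ 2] frob_diff frob_frob power2_commute)
    show "(w - w^q)^2 \<noteq> 0"
      using \<open>w \<noteq> w^q\<close> by simp
  qed
  finally show ?thesis .
qed

end

theorem proposition8:
  fixes m :: nat and \<alpha> Z :: "'a::{field,finite}"
  assumes "m \<ge> 1"
    and "card (UNIV :: 'a set) = (3 ^ m) ^ 2"
    and "\<alpha> \<in> C1 (3 ^ m)"
    and "Z \<notin> Fq (3 ^ m)" and "Z ^ 2 = \<alpha>"
  shows "(\<forall>c :: 'a \<in> Fq (3 ^ m) - {0}.
            beta_f (\<lambda>x. x ^ (3 ^ m + 2)) 1 (c / 4) =
              (if c ^ 2 + 1 \<in> C1 (3 ^ m) then 3 ^ m + 2 else 3 ^ m))
       \<and> (\<forall>d \<in> Fq (3 ^ m) - {0}. beta_f (\<lambda>x. x ^ (3 ^ m + 2)) 1 (d * Z / 4) = 1)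
       \<and> nu (\<lambda>x::'a. x ^ (3 ^ m + 2)) 1 > 0
       \<and> (\<forall>c :: 'a \<in> Fq (3 ^ m) - {0}. \<forall>d \<in> Fq (3 ^ m) - {0}.
            beta_f (\<lambda>x. x ^ (3 ^ m + 2)) 1 ((c + d * Z) / 4) \<in> {0, 1, 2, 5})"
proof -
  have "Z^2 \<in> Fq (3^m)"
    using assms(3,5) by (simp add: C1_def)
  then interpret char3_quadratic_ext m "3^m" Z
    using assms(2,4) by unfold_locales auto
  have beta_at_dZ: "\<forall>d \<in> Fq (3^m) - {0}. beta_f (\<lambda>x::'a. x ^ (3^m + 2)) 1 (d * Z / 4) = 1"
    using beta_Fq_Z by blast
  then have "beta_f (\<lambda>x::'a. x ^ (3^m + 2)) 1 (1 * Z / 4) = 1"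
    using Fq_1 one_neq_zero by blast
  moreover have "1 * Z / 4 \<noteq> 0"
    using Z_neq_0 four_eq_one by simp
  ultimately have "1 * Z / 4 \<in> {b. b \<noteq> 0 \<and> beta_f (\<lambda>x::'a. x ^ (3^m + 2)) 1 b = 1}"
    by simp
  then have "nu (\<lambda>x::'a. x ^ (3^m + 2)) 1 > 0"
    unfolding nu_def card_gt_0_iff using finite by blast
  then show ?thesis
    using beta_Fq beta_at_dZ beta_Fq_plus_Z by blast
qed

end
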